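(* Let $\mathcal{Z}=\mathbb{Z}^d$, $p\ge1$, $q\ge0$, and let $(a_{\ell;\mathbf{j}})_{\ell\in\mathcal{Z},\mathbf{j}\in\mathcal{Z}^p}$ be coefficients such that $a_{\ell;\mathbf{j}}=0$ whenever $\max_{1\le n\le d}|\mathcal{M}(\ell,\mathbf{j})^n|>q$, where $\mathcal{M}(\ell,\mathbf{j})=\ell-j_1-\cdots-j_p\in\mathbb{Z}^d$. There is a constant $C$ depending only on $d,q,p$ such that for all $M\in\mathbb{N}\cup\{+\infty\}$ and all integers $N\ge2$: (i) $\#\{(\ell,j_1,\dots,j_p)\in\mathcal{K}_M^{p+1}: \|j_1\|\cdots\|j_p\|\le N,\ a_{\ell;\mathbf{j}}\ne0\}\le C N^d(\log N)^{p-1}$; (ii) $\#\{(\ell,j_1,\dots,j_p)\in(\mathcal{K}^*_M)^{p+1}: |j_1|\cdots|j_p|\le N,\ a_{\ell;\mathbf{j}}\ne0\}\le C N(\log N)^{dp-1}$.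
   Context: For $j=(j^1,\dots,j^d)\in\mathbb{Z}^d$: $\|j\|=\max(1,|j^1|,\dots,|j^d|)$ and the sparse size $|j|=\prod_{n=1}^d(1+|j^n|)$. For $M\in\mathbb{N}\cup\{+\infty\}$, $\mathcal{K}_M=\{j:\|j\|\le M\}$ and $\mathcal{K}^*_M=\{j:|j|\le M\}$. $\#F$ is the cardinality of $F$. *)

theory Defs
  imports "HOL-Analysis.Analysis" "HOL-Library.Extended_Nat"
begin

text \<open>Lattice points of Z^d are modelled as int ^ 'd, with d = CARD('d).\<close>

definition lnorm :: "int ^ 'd \<Rightarrow> int" where
  "lnorm j = max 1 (Max (range (\<lambda>n. \<bar>j $ n\<bar>)))"

definition ssize :: "int ^ 'd \<Rightarrow> int" where
  "ssize j = (\<Prod>n\<in>UNIV. 1 + \<bar>j $ n\<bar>)"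

definition KM :: "enat \<Rightarrow> (int ^ 'd) set" where
  "KM M = {j. enat (nat (lnorm j)) \<le> M}"

definition KMstar :: "enat \<Rightarrow> (int ^ 'd) set" where
  "KMstar M = {j. enat (nat (ssize j)) \<le> M}"

definition momentum :: "int ^ 'd \<Rightarrow> (int ^ 'd) list \<Rightarrow> int ^ 'd" where
  "momentum l js = l - sum_list js"

end

theory Submission
  imports Defs
begin

(*
  Dropping the constraint "in K_M", the configurations counted in (i) are pairs
  (l, js) with js in lnorm_tuples p N (p-tuples in Z^d with product of sup-norms
  at most N) and momentum l - sum js in the cube [-q, q]^d, because a l js
  vanishes otherwise; so each js admits at most (2q+1)^d values of l
  (card_configurations).  Likewise for (ii) with ssize_tuples p N.

  Tuples with bounded product are counted by a divisor-type estimate for an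
  arbitrary weight w >= 1 (card_weighted_tuples): if the ball {w <= x} has at
  most B x^e points and the sum of w^-e over it is at most B (1 + ln x), then
  there are at most B^r x^e (1 + ln x)^(r-1) r-tuples whose weights have product
  at most x; the proof is an induction on r, peeling off the first entry.
  This is applied to the sup-norm on Z^d (e = d; the ball is a cube, and the sum
  is estimated shell by shell against the harmonic numbers) and to the weight
  1 + |v| on Z (e = 1).  The sparse size of a vector is the product of these
  weights over its coordinates, so flattening embeds ssize_tuples p N into
  (d p)-tuples of integers.  Finally 1 + ln N <= 3 ln N for N >= 2.
*)

section \<open>Tuples with bounded product of weights\<close>

definition weighted_tuples :: "('a \<Rightarrow> nat) \<Rightarrow> nat \<Rightarrow> real \<Rightarrow> 'a list set" where
  "weighted_tuples w r x = {xs. length xs = r \<and> real (prod_list (map w xs)) \<le> x}"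

lemma weighted_tuples_Suc:
  assumes w1: "\<And>y. w y \<ge> 1"
  shows "weighted_tuples w (Suc r) x \<subseteq>
    (\<lambda>(y, ys). y # ys) ` (SIGMA y:{y. real (w y) \<le> x}. weighted_tuples w r (x / w y))"
proof
  fix xs assume "xs \<in> weighted_tuples w (Suc r) x"
  then obtain y ys where xs: "xs = y # ys" "length ys = r"
    and prod: "real (w y) * real (prod_list (map w ys)) \<le> x"
    by (auto simp: weighted_tuples_def length_Suc_conv)
  have wy: "real (w y) \<ge> 1" using w1[of y] by simp
  have "prod_list (map w ys) \<noteq> 0"
    by (auto simp: prod_list_zero_iff) (metis w1 not_one_le_zero)
  hence "real (prod_list (map w ys)) \<ge> 1" by (simp add: Suc_le_eq)
  hence "real (w y) \<le> real (w y) * real (prod_list (map w ys))"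
    using mult_left_mono[of 1 _ "real (w y)"] by simp
  hence "real (w y) \<le> x" using prod by linarith
  moreover have "real (prod_list (map w ys)) \<le> x / w y"
    using prod wy by (simp add: pos_le_divide_eq mult.commute)
  ultimately show "xs \<in> (\<lambda>(y, ys). y # ys) ` (SIGMA y:{y. real (w y) \<le> x}. weighted_tuples w r (x / w y))"
    using xs by (auto simp: weighted_tuples_def)
qed

lemma finite_weighted_tuples:
  assumes w1: "\<And>y. w y \<ge> 1" and fin: "\<And>x. finite {y. real (w y) \<le> x}"
  shows "finite (weighted_tuples w r x)"
proof (induction r arbitrary: x)
  case 0
  have "weighted_tuples w 0 x \<subseteq> {[]}" by (auto simp: weighted_tuples_def)
  thus ?case by (rule finite_subset) simp
next
  case (Suc r)
  show ?case
    by (rule finite_subset[OF weighted_tuples_Suc[OF w1]]) (intro finite_imageI finite_SigmaI fin Suc.IH)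
qed

lemma card_weighted_tuples:
  fixes B :: real and e :: nat
  assumes w1: "\<And>y. w y \<ge> 1" and fin: "\<And>x. finite {y. real (w y) \<le> x}"
    and B0: "B \<ge> 0"
    and ball: "\<And>x. x \<ge> 1 \<Longrightarrow> real (card {y. real (w y) \<le> x}) \<le> B * x ^ e"
    and harmonic: "\<And>x. x \<ge> 1 \<Longrightarrow> (\<Sum>y\<in>{y. real (w y) \<le> x}. 1 / real (w y) ^ e) \<le> B * (1 + ln x)"
    and "r \<ge> 1" "x \<ge> 1"
  shows "real (card (weighted_tuples w r x)) \<le> B ^ r * x ^ e * (1 + ln x) ^ (r - 1)"
  using \<open>r \<ge> 1\<close> \<open>x \<ge> 1\<close>
proof (induction r arbitrary: x rule: nat_induct_at_least)
  case base
  have "weighted_tuples w 1 x = (\<lambda>y. [y]) ` {y. real (w y) \<le> x}"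
    by (auto simp: weighted_tuples_def length_Suc_conv)
  hence "card (weighted_tuples w 1 x) = card {y. real (w y) \<le> x}"
    by (simp add: card_image inj_on_def)
  thus ?case using ball[OF base] by simp
next
  case (Suc r)
  let ?Y = "{y. real (w y) \<le> x}"
  let ?c = "B ^ r * x ^ e * (1 + ln x) ^ (r - 1)"
  have fin_tuples: "finite (SIGMA y:?Y. weighted_tuples w r (x / w y))"
    by (intro finite_SigmaI fin finite_weighted_tuples w1)
  have "card (weighted_tuples w (Suc r) x) \<le> card ((\<lambda>(y, ys). y # ys) ` (SIGMA y:?Y. weighted_tuples w r (x / w y)))"
    by (intro card_mono finite_imageI fin_tuples weighted_tuples_Suc w1)
  also have "\<dots> \<le> card (SIGMA y:?Y. weighted_tuples w r (x / w y))"
    by (rule card_image_le[OF fin_tuples])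
  also have "\<dots> = (\<Sum>y\<in>?Y. card (weighted_tuples w r (x / w y)))"
    by (rule card_SigmaI) (auto intro: fin finite_weighted_tuples[OF w1 fin])
  finally have "real (card (weighted_tuples w (Suc r) x)) \<le> (\<Sum>y\<in>?Y. real (card (weighted_tuples w r (x / w y))))"
    by (metis of_nat_le_iff of_nat_sum)
  also have "\<dots> \<le> (\<Sum>y\<in>?Y. ?c * (1 / real (w y) ^ e))"
  proof (rule sum_mono)
    fix y assume y: "y \<in> ?Y"
    have wy: "real (w y) \<ge> 1" using w1[of y] by simp
    have x1: "x / w y \<ge> 1" using y wy by simp
    have "(1 + ln (x / w y)) ^ (r - 1) \<le> (1 + ln x) ^ (r - 1)"
      using wy Suc.prems x1 by (intro power_mono) (auto simp: ln_div)
    hence "B ^ r * (x / w y) ^ e * (1 + ln (x / w y)) ^ (r - 1) \<le> B ^ r * (x / w y) ^ e * (1 + ln x) ^ (r - 1)"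
      using B0 x1 by (intro mult_left_mono) auto
    thus "real (card (weighted_tuples w r (x / w y))) \<le> ?c * (1 / real (w y) ^ e)"
      using Suc.IH[OF x1] by (simp add: power_divide)
  qed
  also have "\<dots> = ?c * (\<Sum>y\<in>?Y. 1 / real (w y) ^ e)"
    by (simp add: sum_distrib_left)
  also have "\<dots> \<le> ?c * (B * (1 + ln x))"
    using harmonic[OF Suc.prems] Suc.prems B0 by (intro mult_left_mono) auto
  also have "\<dots> = B ^ Suc r * x ^ e * (1 + ln x) ^ (Suc r - 1)"
    using Suc.hyps by (cases r) (auto simp: algebra_simps)
  finally show ?case .
qed

text \<open>Harmonic numbers grow logarithmically; via the Euler--Mascheroni monotonicity.\<close>
lemma harm_floor_le:
  fixes x :: real
  assumes x: "x \<ge> 1"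
  shows "harm (nat \<lfloor>x\<rfloor>) \<le> 1 + ln x"
proof -
  have K: "nat \<lfloor>x\<rfloor> \<ge> 1" using x by (simp add: le_nat_iff)
  have "harm (nat \<lfloor>x\<rfloor>) - ln (real (nat \<lfloor>x\<rfloor>)) \<le> harm 1 - ln (real (1::nat))"
    using K by (intro euler_mascheroni_sequence_decreasing) auto
  moreover have "ln (real (nat \<lfloor>x\<rfloor>)) \<le> ln x" using K x by simp
  ultimately show ?thesis by (simp add: harm_def)
qed

lemma power_diff_le:
  fixes a b :: real
  assumes "0 \<le> b" "b \<le> a"
  shows "a ^ n - b ^ n \<le> real n * (a - b) * a ^ (n - 1)"
proof (induction n)
  case (Suc n)
  have "a ^ Suc n - b ^ Suc n = a * (a ^ n - b ^ n) + b ^ n * (a - b)" by (simp add: algebra_simps)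
  also have "\<dots> \<le> a * (real n * (a - b) * a ^ (n - 1)) + a ^ n * (a - b)"
    using assms Suc.IH by (intro add_mono mult_left_mono mult_right_mono power_mono) auto
  also have "\<dots> = real (Suc n) * (a - b) * a ^ (Suc n - 1)"
    by (cases n) (auto simp: algebra_simps)
  finally show ?case .
qed simp

text \<open>For N >= 2 we have ln N >= ln 2 >= 1/2, hence 1 + ln N <= 3 ln N.\<close>
lemma one_plus_ln_power_le:
  assumes "(N::nat) \<ge> 2"
  shows "(1 + ln (real N)) ^ k \<le> 3 ^ k * ln (real N) ^ k"
proof -
  have "ln (1/2::real) \<le> 1/2 - 1" by (rule ln_le_minus_one) simp
  hence "ln (2::real) \<ge> 1/2" by (simp add: ln_div)
  moreover have "ln (2::real) \<le> ln (real N)" using assms by simp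
  ultimately have "(1 + ln (real N)) ^ k \<le> (3 * ln (real N)) ^ k"
    by (intro power_mono) auto
  thus ?thesis by (simp add: power_mult_distrib)
qed

lemma one_plus_ln_bound:
  assumes "(N::nat) \<ge> 2" "A \<ge> 0" "c \<le> A * (1 + ln (real N)) ^ k"
  shows "c \<le> A * 3 ^ k * ln (real N) ^ k"
  using order_trans[OF assms(3) mult_left_mono[OF one_plus_ln_power_le[OF assms(1)] assms(2)]]
  by (simp add: mult_ac)

lemma int_prod_list_nat:
  assumes "\<And>x. f x \<ge> (0::int)"
  shows "int (prod_list (map (\<lambda>x. nat (f x)) xs)) = prod_list (map f xs)"
  using assms by (induction xs) auto

section \<open>The sup-norm on Z^d\<close>

lemma two_card_ge_1: "1 \<le> 2 * real CARD('a::finite)"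
proof -
  have "CARD('a) \<ge> 1" by (simp add: Suc_le_eq)
  thus ?thesis by linarith
qed

lemma lnorm_ge1: "lnorm j \<ge> 1"
  by (simp add: lnorm_def)

lemma real_nat_lnorm: "real (nat (lnorm j)) = real_of_int (lnorm j)"
  using lnorm_ge1[of j] by simp

lemma lnorm_le_iff: "k \<ge> 1 \<Longrightarrow> lnorm (j::int^'d) \<le> k \<longleftrightarrow> (\<forall>n. \<bar>j $ n\<bar> \<le> k)"
  by (auto simp: lnorm_def Max_le_iff)

definition cube :: "nat \<Rightarrow> (int^'d) set" where
  "cube k = {j. \<forall>n. \<bar>j $ n\<bar> \<le> int k}"

lemma card_cube: "card (cube k :: (int^'d) set) = (2*k+1) ^ CARD('d)"
proof -
  have "bij_betw vec_nth (cube k :: (int^'d) set) (PiE UNIV (\<lambda>_. {-int k..int k}))"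
  proof (rule bij_betwI[where g = vec_lambda])
    show "vec_nth \<in> (cube k :: (int^'d) set) \<rightarrow> PiE UNIV (\<lambda>_. {-int k..int k})"
      by (auto simp: cube_def abs_le_iff) (metis minus_le_iff)
    show "vec_lambda \<in> PiE UNIV (\<lambda>_. {-int k..int k}) \<rightarrow> (cube k :: (int^'d) set)"
      by (auto simp: cube_def PiE_def Pi_def abs_le_iff) (metis minus_le_iff)
  qed auto
  hence "card (cube k :: (int^'d) set) = card (PiE (UNIV::'d set) (\<lambda>_. {-int k..int k}))"
    by (rule bij_betw_same_card)
  thus ?thesis by (simp add: card_PiE nat_add_distrib nat_mult_distrib)
qed

lemma finite_cube: "finite (cube k :: (int^'d) set)"
  using card_cube[of k, where 'd='d] by (intro card_ge_0_finite) simp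

lemma cube_mono: "k \<le> l \<Longrightarrow> cube k \<subseteq> cube l"
  by (auto simp: cube_def) (meson dual_order.trans of_nat_le_iff)

lemma cube_eq_lnorm_le: "k \<ge> 1 \<Longrightarrow> cube k = {j. lnorm j \<le> int k}"
  using lnorm_le_iff[of "int k"] by (auto simp: cube_def)

lemma card_cube_shell:
  "real (card (cube (Suc K) - cube K :: (int^'d) set))
     \<le> 2 * real CARD('d) * 3 ^ (CARD('d) - 1) * real (Suc K) ^ (CARD('d) - 1)"
proof -
  let ?d = "CARD('d)"
  have "card (cube (Suc K) - cube K :: (int^'d) set) = card (cube (Suc K) :: (int^'d) set) - card (cube K :: (int^'d) set)"
    by (rule card_Diff_subset[OF finite_cube cube_mono]) simp
  also have "\<dots> = (2 * Suc K + 1) ^ ?d - (2*K+1) ^ ?d"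
    by (simp only: card_cube)
  finally have "real (card (cube (Suc K) - cube K :: (int^'d) set)) = real (2 * Suc K + 1) ^ ?d - real (2*K+1) ^ ?d"
    by (simp add: of_nat_diff power_mono)
  also have "\<dots> \<le> real ?d * 2 * real (2 * Suc K + 1) ^ (?d - 1)"
    using power_diff_le[of "real (2*K+1)" "real (2 * Suc K + 1)" ?d] by simp
  also have "\<dots> \<le> real ?d * 2 * (3 * real (Suc K)) ^ (?d - 1)"
    by (intro mult_left_mono power_mono) auto
  also have "\<dots> = 2 * real ?d * 3 ^ (?d - 1) * real (Suc K) ^ (?d - 1)"
    by (simp only: power_mult_distrib mult_ac)
  finally show ?thesis .
qed

lemma lnorm_on_shell:
  assumes "K \<ge> 1" "j \<in> cube (Suc K) - cube K"
  shows "lnorm j = int (Suc K)"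
  using assms by (auto simp: cube_eq_lnorm_le)

text \<open>Summing shell by shell: the sum of lnorm^-d over a cube grows like the harmonic numbers.\<close>
lemma sum_cube_lnorm:
  assumes "K \<ge> 1"
  shows "(\<Sum>j\<in>cube K. 1 / real_of_int (lnorm (j::int^'d)) ^ CARD('d))
          \<le> (2 * real CARD('d) * 3 ^ CARD('d)) * harm K"
  using assms
proof (induction K rule: nat_induct_at_least)
  case base
  have "lnorm j = 1" if "j \<in> cube 1" for j :: "int^'d"
    using that lnorm_ge1[of j] by (auto simp: cube_eq_lnorm_le)
  hence "(\<Sum>j\<in>cube 1. 1 / real_of_int (lnorm (j::int^'d)) ^ CARD('d)) = 3 ^ CARD('d)"
    by (simp add: card_cube)
  also have "\<dots> \<le> (2 * real CARD('d) * 3 ^ CARD('d)) * harm 1"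
    using two_card_ge_1[where 'a='d] by (simp add: harm_def)
  finally show ?case .
next
  case (Suc K)
  let ?d = "CARD('d)" and ?D = "cube (Suc K) - cube K :: (int^'d) set"
  let ?f = "\<lambda>j::int^'d. 1 / real_of_int (lnorm j) ^ ?d"
  have "sum ?f ?D = (\<Sum>j\<in>?D. 1 / real (Suc K) ^ ?d)"
    by (intro sum.cong refl) (simp add: lnorm_on_shell[OF Suc.hyps])
  also have "\<dots> = real (card ?D) / real (Suc K) ^ ?d" by simp
  also have "\<dots> \<le> 2 * real ?d * 3 ^ (?d - 1) * real (Suc K) ^ (?d - 1) / real (Suc K) ^ ?d"
    by (intro divide_right_mono card_cube_shell) auto
  also have "\<dots> = 2 * real ?d * 3 ^ (?d - 1) / real (Suc K)"
  proof -
    have "real (Suc K) ^ ?d = real (Suc K) ^ (?d - 1) * real (Suc K)"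
      by (metis Suc_diff_1 power_Suc2 zero_less_card_finite)
    thus ?thesis by simp
  qed
  also have "\<dots> \<le> (2 * real ?d * 3 ^ ?d) / real (Suc K)"
    by (intro divide_right_mono mult_left_mono power_increasing) auto
  finally have shell: "sum ?f ?D \<le> (2 * real ?d * 3 ^ ?d) / real (Suc K)" .
  have "sum ?f (cube (Suc K)) = sum ?f ?D + sum ?f (cube K)"
    by (rule sum.subset_diff[OF cube_mono finite_cube]) simp
  also have "\<dots> \<le> (2 * real ?d * 3 ^ ?d) * harm (Suc K)"
    using Suc.IH shell by (simp add: harm_Suc algebra_simps divide_inverse)
  finally show ?case .
qed

lemma lnorm_ball_eq_cube:
  assumes x: "x \<ge> 1"
  shows "{j::int^'d. real (nat (lnorm j)) \<le> x} = cube (nat \<lfloor>x\<rfloor>)"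
proof -
  have "cube (nat \<lfloor>x\<rfloor>) = {j::int^'d. lnorm j \<le> int (nat \<lfloor>x\<rfloor>)}"
    using x by (intro cube_eq_lnorm_le) (simp add: le_nat_iff)
  also have "\<dots> = {j. real (nat (lnorm j)) \<le> x}"
    using x lnorm_ge1 by (auto simp: le_floor_iff)
  finally show ?thesis by simp
qed

text \<open>The two hypotheses of card_weighted_tuples for the sup-norm, with e = d and B = 2 d 3^d.\<close>
lemma card_lnorm_ball:
  assumes x: "x \<ge> 1"
  shows "real (card {j::int^'d. real (nat (lnorm j)) \<le> x}) \<le> (2 * real CARD('d) * 3 ^ CARD('d)) * x ^ CARD('d)"
proof -
  let ?d = "CARD('d)"
  have "real (card {j::int^'d. real (nat (lnorm j)) \<le> x}) = real (2 * nat \<lfloor>x\<rfloor> + 1) ^ ?d"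
    using x by (simp add: lnorm_ball_eq_cube card_cube)
  also have "\<dots> \<le> (3 * x) ^ ?d" using x by (intro power_mono) linarith+
  also have "\<dots> = 1 * 3 ^ ?d * x ^ ?d" by (simp add: power_mult_distrib)
  also have "\<dots> \<le> (2 * real ?d) * 3 ^ ?d * x ^ ?d"
    using two_card_ge_1[where 'a='d] x by (intro mult_right_mono) auto
  finally show ?thesis .
qed

lemma sum_lnorm_ball:
  assumes x: "x \<ge> 1"
  shows "(\<Sum>j\<in>{j::int^'d. real (nat (lnorm j)) \<le> x}. 1 / real (nat (lnorm j)) ^ CARD('d))
    \<le> (2 * real CARD('d) * 3 ^ CARD('d)) * (1 + ln x)"
proof -
  let ?B = "2 * real CARD('d) * 3 ^ CARD('d)"
  have "(\<Sum>j\<in>{j::int^'d. real (nat (lnorm j)) \<le> x}. 1 / real (nat (lnorm j)) ^ CARD('d))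
      = (\<Sum>j\<in>cube (nat \<lfloor>x\<rfloor>). 1 / real_of_int (lnorm (j::int^'d)) ^ CARD('d))"
    by (subst lnorm_ball_eq_cube[OF x]) (simp add: real_nat_lnorm)
  also have "\<dots> \<le> ?B * harm (nat \<lfloor>x\<rfloor>)"
    using x by (intro sum_cube_lnorm) (simp add: le_nat_iff)
  also have "\<dots> \<le> ?B * (1 + ln x)"
    using harm_floor_le[OF x] by (intro mult_left_mono) auto
  finally show ?thesis .
qed

definition lnorm_tuples :: "nat \<Rightarrow> nat \<Rightarrow> (int^'d) list set" where
  "lnorm_tuples p N = {js. length js = p \<and> prod_list (map lnorm js) \<le> int N}"

lemma card_lnorm_tuples:
  assumes "p \<ge> 1" "N \<ge> 1"
  shows "finite (lnorm_tuples p N :: (int^'d) list set)"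
    and "real (card (lnorm_tuples p N :: (int^'d) list set))
      \<le> (2 * real CARD('d) * 3 ^ CARD('d)) ^ p * real N ^ CARD('d) * (1 + ln (real N)) ^ (p - 1)"
proof -
  let ?w = "\<lambda>j::int^'d. nat (lnorm j)"
  have w1: "?w j \<ge> 1" for j using lnorm_ge1[of j] by linarith
  have fin: "finite {j. real (?w j) \<le> x}" for x
  proof -
    have "{j. real (?w j) \<le> x} \<subseteq> {j. real (?w j) \<le> max 1 x}" by auto
    thus ?thesis using lnorm_ball_eq_cube[of "max 1 x"] finite_cube finite_subset by (metis max.cobounded1)
  qed
  have "prod_list (map lnorm js) = int (prod_list (map ?w js))" for js :: "(int^'d) list"
    using int_prod_list_nat[of lnorm js] lnorm_ge1 by (metis order_trans zero_le_one)
  hence eq: "lnorm_tuples p N = weighted_tuples ?w p (real N)"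
    by (auto simp: lnorm_tuples_def weighted_tuples_def)
  show "finite (lnorm_tuples p N :: (int^'d) list set)"
    unfolding eq by (intro finite_weighted_tuples w1 fin)
  show "real (card (lnorm_tuples p N :: (int^'d) list set))
      \<le> (2 * real CARD('d) * 3 ^ CARD('d)) ^ p * real N ^ CARD('d) * (1 + ln (real N)) ^ (p - 1)"
    unfolding eq using assms
    by (intro card_weighted_tuples w1 fin card_lnorm_ball sum_lnorm_ball) auto
qed

section \<open>The weight 1 + |v| on Z and sparse sizes\<close>

definition sym_interval :: "nat \<Rightarrow> int set" where
  "sym_interval K = {v. 1 + \<bar>v\<bar> \<le> int K}"

lemma sym_interval_eq: "sym_interval K = {-(int K - 1)..int K - 1}"
  by (auto simp: sym_interval_def)

lemma card_sym_interval: "K \<ge> 1 \<Longrightarrow> card (sym_interval K) = 2 * K - 1"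
  by (simp add: sym_interval_eq)

lemma sum_sym_interval: "K \<ge> 1 \<Longrightarrow> (\<Sum>v\<in>sym_interval K. 1 / (1 + real_of_int \<bar>v\<bar>)) \<le> 2 * harm K"
proof (induction K rule: nat_induct_at_least)
  case base
  have "sym_interval 1 = {0}" by (auto simp: sym_interval_def)
  thus ?case by (simp add: harm_def)
next
  case (Suc K)
  have split: "sym_interval (Suc K) = insert (int K) (insert (- int K) (sym_interval K))"
    by (auto simp: sym_interval_def)
  have "int K \<notin> sym_interval K" "- int K \<notin> sym_interval K" "int K \<noteq> - int K"
    using Suc.hyps by (auto simp: sym_interval_def)
  hence "(\<Sum>v\<in>sym_interval (Suc K). 1 / (1 + real_of_int \<bar>v\<bar>))
      = 2 / (1 + real K) + (\<Sum>v\<in>sym_interval K. 1 / (1 + real_of_int \<bar>v\<bar>))"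
    unfolding split by (simp add: sym_interval_eq)
  also have "\<dots> \<le> 2 / (1 + real K) + 2 * harm K" using Suc.IH by simp
  also have "\<dots> = 2 * harm (Suc K)" by (simp add: harm_Suc field_simps)
  finally show ?case .
qed

lemma card_int_tuples:
  assumes "r \<ge> 1" "x \<ge> 1"
  shows "finite (weighted_tuples (\<lambda>v::int. nat (1 + \<bar>v\<bar>)) r x)"
    and "real (card (weighted_tuples (\<lambda>v::int. nat (1 + \<bar>v\<bar>)) r x)) \<le> 2 ^ r * x * (1 + ln x) ^ (r - 1)"
proof -
  let ?w = "\<lambda>v::int. nat (1 + \<bar>v\<bar>)"
  have w1: "?w v \<ge> 1" for v by simp
  have ball_eq: "{v. real (?w v) \<le> x} = sym_interval (nat \<lfloor>x\<rfloor>)" if "x \<ge> 1" for x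
    using that by (auto simp: sym_interval_def) linarith+
  have fin: "finite {v. real (?w v) \<le> x}" for x
  proof -
    have "{v. real (?w v) \<le> x} \<subseteq> {-\<lceil>x\<rceil>..\<lceil>x\<rceil>}" by auto linarith+
    thus ?thesis by (rule finite_subset) simp
  qed
  have ball: "real (card {v. real (?w v) \<le> x}) \<le> 2 * x ^ 1" if x: "x \<ge> 1" for x
  proof -
    have K: "nat \<lfloor>x\<rfloor> \<ge> 1" using x by (simp add: le_nat_iff)
    have "real (card {v. real (?w v) \<le> x}) = real (2 * nat \<lfloor>x\<rfloor> - 1)"
      by (simp only: ball_eq[OF x] card_sym_interval[OF K])
    also have "\<dots> \<le> 2 * x" using K x by (simp add: of_nat_diff) linarith
    finally show ?thesis by simp
  qed
  have harmonic: "(\<Sum>v\<in>{v. real (?w v) \<le> x}. 1 / real (?w v) ^ 1) \<le> 2 * (1 + ln x)"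
    if x: "x \<ge> 1" for x
  proof -
    have "(\<Sum>v\<in>{v. real (?w v) \<le> x}. 1 / real (?w v) ^ 1)
        = (\<Sum>v\<in>sym_interval (nat \<lfloor>x\<rfloor>). 1 / (1 + real_of_int \<bar>v\<bar>))"
      by (subst ball_eq[OF x]) simp
    also have "\<dots> \<le> 2 * harm (nat \<lfloor>x\<rfloor>)"
      using x by (intro sum_sym_interval) (simp add: le_nat_iff)
    also have "\<dots> \<le> 2 * (1 + ln x)" using harm_floor_le[OF x] by simp
    finally show ?thesis .
  qed
  show "finite (weighted_tuples ?w r x)" by (intro finite_weighted_tuples w1 fin)
  show "real (card (weighted_tuples ?w r x)) \<le> 2 ^ r * x * (1 + ln x) ^ (r - 1)"
    using card_weighted_tuples[of ?w 2 1, OF w1 fin _ ball harmonic] assms by simp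
qed

text \<open>Listing the coordinates of each vector (in the order of an enumeration es of
  the index type) flattens a p-tuple in Z^d into a (d p)-tuple in Z; the sparse size
  becomes the product of the weights 1 + |v| of the coordinates.\<close>
definition flatten :: "'d list \<Rightarrow> (int^'d) list \<Rightarrow> int list" where
  "flatten es js = concat (map (\<lambda>j. map (vec_nth j) es) js)"

context
  fixes es :: "'d::finite list"
  assumes es: "distinct es" "set es = UNIV"
begin

lemma length_flatten: "length (flatten es js) = CARD('d) * length js"
  using distinct_card[OF es(1)] es(2) by (induction js) (auto simp: flatten_def)

lemma prod_flatten:
  "int (prod_list (map (\<lambda>v. nat (1 + \<bar>v\<bar>)) (flatten es js))) = prod_list (map ssize js)"
proof -
  have ssize_eq: "prod_list (map (\<lambda>n. 1 + \<bar>j $ n\<bar>) es) = ssize j" for j :: "int^'d"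
    using prod.distinct_set_conv_list[OF es(1), of "\<lambda>n. 1 + \<bar>j $ n\<bar>"] es(2)
    by (simp add: ssize_def)
  have "int (prod_list (map (\<lambda>v. nat (1 + \<bar>v\<bar>)) (flatten es js)))
      = prod_list (map (\<lambda>v. 1 + \<bar>v\<bar>) (flatten es js))"
    by (rule int_prod_list_nat) simp
  also have "\<dots> = prod_list (map ssize js)"
    using ssize_eq by (induction js) (simp_all add: flatten_def o_def)
  finally show ?thesis .
qed

lemma inj_on_flatten: "inj_on (flatten es) {js. length js = p}"
proof -
  have "length a = length b \<Longrightarrow> flatten es a = flatten es b \<Longrightarrow> a = b" for a b
  proof (induction a arbitrary: b)
    case (Cons x a)
    then obtain y b' where b: "b = y # b'" by (cases b) auto
    have "map (vec_nth x) es = map (vec_nth y) es \<and> flatten es a = flatten es b'"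
      using Cons.prems b by (simp add: flatten_def append_eq_append_conv)
    moreover have "x = y" if "map (vec_nth x) es = map (vec_nth y) es"
      using that es(2) by (simp add: vec_eq_iff map_eq_conv)
    ultimately show ?case using Cons.IH Cons.prems b by simp
  qed simp
  thus ?thesis by (auto simp: inj_on_def)
qed

end

definition ssize_tuples :: "nat \<Rightarrow> nat \<Rightarrow> (int^'d) list set" where
  "ssize_tuples p N = {js. length js = p \<and> prod_list (map ssize js) \<le> int N}"

lemma card_ssize_tuples:
  assumes "p \<ge> 1" "N \<ge> 1"
  shows "finite (ssize_tuples p N :: (int^'d) list set)"
    and "real (card (ssize_tuples p N :: (int^'d) list set))
      \<le> 2 ^ (CARD('d) * p) * real N * (1 + ln (real N)) ^ (CARD('d) * p - 1)"
proof -
  let ?d = "CARD('d)" and ?T = "weighted_tuples (\<lambda>v::int. nat (1 + \<bar>v\<bar>)) (CARD('d) * p) (real N)"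
  obtain es :: "'d list" where es: "distinct es" "set es = UNIV"
    using finite_distinct_list[of "UNIV :: 'd set"] by auto
  have into: "flatten es ` ssize_tuples p N \<subseteq> ?T"
  proof
    fix zs assume "zs \<in> flatten es ` ssize_tuples p N"
    then obtain js where js: "length js = p" "prod_list (map ssize js) \<le> int N" "zs = flatten es js"
      by (auto simp: ssize_tuples_def)
    have "int (prod_list (map (\<lambda>v. nat (1 + \<bar>v\<bar>)) zs)) \<le> int N"
      using js prod_flatten[OF es] by simp
    thus "zs \<in> ?T" using js length_flatten[OF es] by (simp add: weighted_tuples_def)
  qed
  have inj: "inj_on (flatten es) (ssize_tuples p N)"
    by (rule inj_on_subset[OF inj_on_flatten[OF es, of p]]) (auto simp: ssize_tuples_def)
  have dp: "?d * p \<ge> 1" using assms(1) by (simp add: Suc_le_eq)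
  have finT: "finite ?T" using card_int_tuples(1)[OF dp] assms by simp
  show fin: "finite (ssize_tuples p N :: (int^'d) list set)"
    using finite_imageD[OF finite_subset[OF into finT] inj] .
  have "card (ssize_tuples p N :: (int^'d) list set) \<le> card ?T"
    using card_inj_on_le[OF inj into finT] .
  thus "real (card (ssize_tuples p N :: (int^'d) list set))
      \<le> 2 ^ (?d * p) * real N * (1 + ln (real N)) ^ (?d * p - 1)"
    using card_int_tuples(2)[OF dp, of "real N"] assms by simp
qed

section \<open>Configurations with bounded momentum\<close>

text \<open>Given js, the momentum constraint leaves at most (2q+1)^d choices for l.\<close>
lemma card_configurations:
  fixes S :: "((int^'d) \<times> (int^'d) list) set"
  assumes "finite J" "real (card J) \<le> b"
    and "\<And>l js. (l, js) \<in> S \<Longrightarrow> js \<in> J \<and> l - sum_list js \<in> cube q"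
  shows "finite S \<and> real (card S) \<le> real ((2*q+1) ^ CARD('d)) * b"
proof -
  let ?f = "\<lambda>(js, m). (sum_list js + m, js)"
  have sub: "S \<subseteq> ?f ` (J \<times> cube q)"
  proof
    fix z assume z: "z \<in> S"
    obtain l js where lz: "z = (l, js)" by (cases z)
    have "(js, l - sum_list js) \<in> J \<times> cube q" using assms(3) z lz by auto
    thus "z \<in> ?f ` (J \<times> cube q)" using lz by force
  qed
  have fin: "finite (J \<times> (cube q :: (int^'d) set))" using assms(1) finite_cube by blast
  have "card S \<le> card (?f ` (J \<times> cube q))" using sub fin by (intro card_mono) auto
  also have "\<dots> \<le> card (J \<times> (cube q :: (int^'d) set))" by (rule card_image_le[OF fin])
  also have "\<dots> = card J * (2*q+1) ^ CARD('d)" by (simp add: card_cartesian_product card_cube)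
  finally have "real (card S) \<le> real (card J) * real ((2*q+1) ^ CARD('d))"
    by (metis of_nat_le_iff of_nat_mult)
  also have "\<dots> \<le> real ((2*q+1) ^ CARD('d)) * b" using assms(2) by (simp add: mult.commute)
  finally show ?thesis using sub fin finite_subset by blast
qed

lemma card_lnorm_configurations:
  fixes S :: "((int^'d) \<times> (int^'d) list) set"
  assumes "p \<ge> 1" "N \<ge> 2"
    and "\<And>l js. (l, js) \<in> S \<Longrightarrow> js \<in> lnorm_tuples p N \<and> l - sum_list js \<in> cube q"
  shows "finite S \<and> real (card S) \<le> real ((2*q+1) ^ CARD('d)) * (2 * real CARD('d) * 3 ^ CARD('d)) ^ p
      * 3 ^ (p - 1) * real N ^ CARD('d) * ln (real N) ^ (p - 1)"
proof -
  have "real (card (lnorm_tuples p N :: (int^'d) list set))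
      \<le> (2 * real CARD('d) * 3 ^ CARD('d)) ^ p * real N ^ CARD('d) * 3 ^ (p - 1) * ln (real N) ^ (p - 1)"
    using assms by (intro one_plus_ln_bound card_lnorm_tuples(2)) auto
  from card_configurations[OF card_lnorm_tuples(1) this assms(3)] assms(1,2)
  show ?thesis by (simp add: mult_ac)
qed

lemma card_ssize_configurations:
  fixes S :: "((int^'d) \<times> (int^'d) list) set"
  assumes "p \<ge> 1" "N \<ge> 2"
    and "\<And>l js. (l, js) \<in> S \<Longrightarrow> js \<in> ssize_tuples p N \<and> l - sum_list js \<in> cube q"
  shows "finite S \<and> real (card S) \<le> real ((2*q+1) ^ CARD('d)) * 2 ^ (CARD('d) * p)
      * 3 ^ (CARD('d) * p - 1) * real N * ln (real N) ^ (CARD('d) * p - 1)"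
proof -
  have "real (card (ssize_tuples p N :: (int^'d) list set))
      \<le> 2 ^ (CARD('d) * p) * real N * 3 ^ (CARD('d) * p - 1) * ln (real N) ^ (CARD('d) * p - 1)"
    using assms by (intro one_plus_ln_bound card_ssize_tuples(2)) auto
  from card_configurations[OF card_ssize_tuples(1) this assms(3)] assms(1,2)
  show ?thesis by (simp add: mult_ac)
qed

text \<open>The constant is the larger of the constants of the two parts; both depend only
  on d, p and q.\<close>
theorem lemma4p2:
  fixes p q :: nat
  assumes "p \<ge> 1"
  shows "\<exists>C::real. \<forall>(a :: int ^ 'd \<Rightarrow> (int ^ 'd) list \<Rightarrow> complex) (M::enat) (N::nat).
    (\<forall>l js. length js = p \<longrightarrow> (\<exists>n. \<bar>momentum l js $ n\<bar> > int q) \<longrightarrow> a l js = 0) \<longrightarrow>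
    N \<ge> 2 \<longrightarrow>
    (let S1 = {(l, js). length js = p \<and> l \<in> KM M \<and> (\<forall>j\<in>set js. j \<in> KM M) \<and>
                 prod_list (map lnorm js) \<le> int N \<and> a l js \<noteq> 0};
         S2 = {(l, js). length js = p \<and> l \<in> KMstar M \<and> (\<forall>j\<in>set js. j \<in> KMstar M) \<and>
                 prod_list (map ssize js) \<le> int N \<and> a l js \<noteq> 0}
     in finite S1 \<and> real (card S1) \<le> C * real N ^ CARD('d) * ln (real N) ^ (p - 1) \<and>
        finite S2 \<and> real (card S2) \<le> C * real N * ln (real N) ^ (CARD('d) * p - 1))"
proof -
  let ?d = "CARD('d)" and ?Q = "real ((2*q+1) ^ CARD('d))"
  define C1 where "C1 = ?Q * (2 * real ?d * 3 ^ ?d) ^ p * 3 ^ (p - 1)"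
  define C2 where "C2 = ?Q * 2 ^ (?d * p) * 3 ^ (?d * p - 1)"
  let ?vanishing = "\<lambda>a :: int ^ 'd \<Rightarrow> (int ^ 'd) list \<Rightarrow> complex.
    \<forall>l js. length js = p \<longrightarrow> (\<exists>n. \<bar>momentum l js $ n\<bar> > int q) \<longrightarrow> a l js = 0"
  have momentum_in_cube: "l - sum_list js \<in> cube q"
    if "?vanishing a" "length js = p" "a l js \<noteq> 0" for a l js
    using that by (force simp: cube_def momentum_def not_less)
  have part_i: "finite S \<and> real (card S) \<le> max C1 C2 * real N ^ ?d * ln (real N) ^ (p - 1)"
    if "?vanishing a" "N \<ge> 2" and S: "S = {(l, js). length js = p \<and> l \<in> KM M \<and>
         (\<forall>j\<in>set js. j \<in> KM M) \<and> prod_list (map lnorm js) \<le> int N \<and> a l js \<noteq> 0}" for a M N S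
  proof -
    have "C1 * (real N ^ ?d * ln (real N) ^ (p - 1)) \<le> max C1 C2 * (real N ^ ?d * ln (real N) ^ (p - 1))"
      using that by (intro mult_right_mono) auto
    thus ?thesis using card_lnorm_configurations[OF assms that(2), of S q] momentum_in_cube[OF that(1)]
      by (auto simp: S lnorm_tuples_def C1_def mult.assoc)
  qed
  have part_ii: "finite S \<and> real (card S) \<le> max C1 C2 * real N * ln (real N) ^ (?d * p - 1)"
    if "?vanishing a" "N \<ge> 2" and S: "S = {(l, js). length js = p \<and> l \<in> KMstar M \<and>
         (\<forall>j\<in>set js. j \<in> KMstar M) \<and> prod_list (map ssize js) \<le> int N \<and> a l js \<noteq> 0}" for a M N S
  proof -
    have "C2 * (real N * ln (real N) ^ (?d * p - 1)) \<le> max C1 C2 * (real N * ln (real N) ^ (?d * p - 1))"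
      using that by (intro mult_right_mono) auto
    thus ?thesis using card_ssize_configurations[OF assms that(2), of S q] momentum_in_cube[OF that(1)]
      by (auto simp: S ssize_tuples_def C2_def mult.assoc)
  qed
  show ?thesis unfolding Let_def using part_i[OF _ _ refl] part_ii[OF _ _ refl] by blast
qed

end
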